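(* Every maximum class $C\subseteq\{0,1\}^n$ of VC-dimension $2$ can be corner-peeled.
   Context: $C\subseteq\{0,1\}^n$ is maximum of VC-dimension $2$ if its VC-dimension is $2$ and $|C|=1+n+\binom{n}{2}$. One-inclusion graph $\Gamma(C)$: vertices $C$, edges between concepts differing in exactly one coordinate. A $k$-cube in $C$ is a set of $2^k$ points of $C$ agreeing outside some $k$ coordinates and taking all values on them. $C$ can be corner-peeled if there is an ordering $v_1,\dots,v_{|C|}$ of $C$ such that, with $C_0=C$ and $C_t=C_{t-1}\setminus\{v_t\}$, for each $t$ there is a unique cube $C'_{t-1}$ of maximum dimension among cubes contained in $C_{t-1}$ that contain $v_t$, and all neighbours of $v_t$ in $\Gamma(C_{t-1})$ lie in $C'_{t-1}$ (so that $C_{|C|}=\emptyset$). *)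

theory Defs
  imports Main
begin

text \<open>Concepts in {0,1}^n are represented as boolean lists of length n;
  coordinates are the indices i < n.\<close>

definition cube_space :: "nat \<Rightarrow> bool list set" where
  "cube_space n = {x. length x = n}"

definition shatters :: "nat \<Rightarrow> bool list set \<Rightarrow> nat set \<Rightarrow> bool" where
  "shatters n C S \<longleftrightarrow> S \<subseteq> {..<n} \<and>
     (\<forall>T \<subseteq> S. \<exists>c\<in>C. \<forall>i\<in>S. c ! i \<longleftrightarrow> i \<in> T)"

definition vc_dim :: "nat \<Rightarrow> bool list set \<Rightarrow> nat" where
  "vc_dim n C = Max {card S | S. shatters n C S}"

definition maximum_vc2 :: "nat \<Rightarrow> bool list set \<Rightarrow> bool" where
  "maximum_vc2 n C \<longleftrightarrow> C \<subseteq> cube_space n \<and> vc_dim n C = 2 \<and>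
     card C = 1 + n + (n choose 2)"

definition oig_adj :: "nat \<Rightarrow> bool list \<Rightarrow> bool list \<Rightarrow> bool" where
  "oig_adj n u w \<longleftrightarrow> length u = n \<and> length w = n \<and>
     card {i. i < n \<and> u ! i \<noteq> w ! i} = 1"

definition is_cube :: "nat \<Rightarrow> nat set \<Rightarrow> bool list set \<Rightarrow> bool" where
  "is_cube n I Q \<longleftrightarrow> I \<subseteq> {..<n} \<and>
     (\<exists>b. length b = n \<and> Q = {x. length x = n \<and> (\<forall>i<n. i \<notin> I \<longrightarrow> x ! i = b ! i)})"

definition unique_max_cube :: "nat \<Rightarrow> bool list set \<Rightarrow> bool list \<Rightarrow> bool list set \<Rightarrow> bool" where
  "unique_max_cube n D v Q \<longleftrightarrow>
     (\<exists>I. is_cube n I Q \<and> Q \<subseteq> D \<and> v \<in> Q \<and>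
        (\<forall>J Q'. is_cube n J Q' \<and> Q' \<subseteq> D \<and> v \<in> Q' \<longrightarrow>
           card J \<le> card I \<and> (card J = card I \<longrightarrow> Q' = Q)))"

definition corner_peeling :: "nat \<Rightarrow> bool list set \<Rightarrow> bool list list \<Rightarrow> bool" where
  "corner_peeling n C vs \<longleftrightarrow> distinct vs \<and> set vs = C \<and>
     (\<forall>t < length vs.
        let D = C - set (take t vs); v = vs ! t in
        \<exists>Q. unique_max_cube n D v Q \<and> (\<forall>w\<in>D. oig_adj n v w \<longrightarrow> w \<in> Q))"

definition corner_peelable :: "nat \<Rightarrow> bool list set \<Rightarrow> bool" where
  "corner_peelable n C \<longleftrightarrow> (\<exists>vs. corner_peeling n C vs)"

end

theory Submission
  imports Defs
begin

text \<open>A point c of a class is a corner if the subcube spanned at c by all edges of the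
  one-inclusion graph at c lies in the class. That subcube is then the unique maximum cube
  through c and contains every neighbour of c, so it suffices to find a corner in every class
  obtained by successively removing corners.

  This is done through an invariant, tameness: for every coordinate j, the points whose
  j-neighbour is also in the class form, on either side of j, an isometric class without
  shattered pairs (a tree of the cube). A maximum class of VC-dimension 2 is tame, because its
  reductions are maximum of VC-dimension 1 and maximum classes are isometric; the latter is
  proved by induction on the dimension, using that projection and reduction commute on
  maximum classes. Tameness survives restriction to a halfspace and removal of a corner, and a
  tame class has a corner outside any proper subclass that is such a tree: by induction on its
  size, cut along a direction in which the tree has no edge, or along the edge at a leaf of
  the tree.\<close>

section \<open>Flips, subcubes and corners\<close>

definition flip :: "bool list \<Rightarrow> nat \<Rightarrow> bool list" where
  "flip x k = x[k := \<not> x ! k]"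

lemma length_flip [simp]: "length (flip x k) = length x"
  by (simp add: flip_def)

lemma nth_flip_same [simp]: "k < length x \<Longrightarrow> flip x k ! k = (\<not> x ! k)"
  by (simp add: flip_def)

lemma nth_flip_other [simp]: "i \<noteq> k \<Longrightarrow> flip x k ! i = x ! i"
  by (simp add: flip_def)

lemma nth_flip: "flip x k ! i = (if i = k \<and> k < length x then \<not> x ! k else x ! i)"
  by (cases "k < length x") (auto simp: flip_def nth_list_update list_update_beyond)

lemma flip_flip [simp]: "k < length x \<Longrightarrow> flip (flip x k) k = x"
  by (simp add: flip_def)

lemma flip_commute: "flip (flip x k) l = flip (flip x l) k"
  by (cases "k = l") (simp_all add: flip_def list_update_swap)

lemma flip_neq: "k < length x \<Longrightarrow> flip x k \<noteq> x"
  by (metis nth_flip_same)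

lemma list_update_nth_self: "xs ! i = a \<Longrightarrow> xs[i := a] = xs"
  using list_update_id by blast

lemma list_eq_off_two:
  assumes "length x = n" "length y = n" "x ! a = y ! a" "x ! b = y ! b"
    and "\<And>i. i < n \<Longrightarrow> i \<noteq> a \<Longrightarrow> i \<noteq> b \<Longrightarrow> x ! i = y ! i"
  shows "x = y"
proof (rule nth_equalityI)
  fix i assume "i < length x"
  then show "x ! i = y ! i"
    using assms by (cases "i = a \<or> i = b") auto
qed (use assms in simp)

lemma clear_eq_cases:
  assumes len: "length x = n" "length z = n" and i: "i < n" and eq: "z[i := False] = x[i := False]"
  shows "z = x \<or> z = flip x i"
proof -
  have agree: "z ! m = x ! m" if "m < n" "m \<noteq> i" for m
    using arg_cong[OF eq, of "\<lambda>y. y ! m"] that by simp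
  show ?thesis
  proof (cases "z ! i = x ! i")
    case True
    then show ?thesis
      using list_eq_off_two[OF len(2,1) True True] agree by blast
  next
    case False
    then have "z ! i = flip x i ! i"
      using len i by simp
    then show ?thesis
      using list_eq_off_two[of z n "flip x i" i i] len agree by simp
  qed
qed

lemma length_in_cube_space: "x \<in> cube_space n \<Longrightarrow> length x = n"
  by (simp add: cube_space_def)

lemma finite_cube_space: "finite (cube_space n)"
proof -
  have "cube_space n = {xs. set xs \<subseteq> UNIV \<and> length xs = n}"
    by (auto simp: cube_space_def)
  then show ?thesis
    using finite_lists_length_eq[of "UNIV :: bool set" n] by simp
qed

lemma finite_subset_cube_space: "D \<subseteq> cube_space n \<Longrightarrow> finite D"
  using finite_cube_space finite_subset by blast

lemma oig_adj_flip:
  assumes "oig_adj n v w"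
  obtains k where "k < n" "w = flip v k"
proof -
  have lengths: "length v = n" "length w = n"
    using assms by (auto simp: oig_adj_def)
  have "card {i. i < n \<and> v ! i \<noteq> w ! i} = 1"
    using assms by (simp add: oig_adj_def)
  then obtain k where k: "{i. i < n \<and> v ! i \<noteq> w ! i} = {k}"
    by (rule card_1_singletonE)
  have kdiff: "k < n" "v ! k \<noteq> w ! k"
    using k by blast+
  have "w ! i = flip v k ! i" if "i < n" for i
  proof (cases "i = k")
    case False
    then have "i \<notin> {i. i < n \<and> v ! i \<noteq> w ! i}"
      using k by blast
    with False that show ?thesis by simp
  qed (use kdiff lengths in simp)
  then have "w = flip v k"
    using lengths by (intro nth_equalityI) simp_all
  with that kdiff show thesis by blast
qed

definition hamming :: "nat \<Rightarrow> bool list \<Rightarrow> bool list \<Rightarrow> nat" where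
  "hamming n x y = card {i. i < n \<and> x ! i \<noteq> y ! i}"

lemma hamming_self [simp]: "hamming n x x = 0"
  by (simp add: hamming_def)

lemma hamming_pos:
  assumes "length x = n" "length y = n" "x \<noteq> y"
  shows "0 < hamming n x y"
proof -
  obtain i where "i < n" "x ! i \<noteq> y ! i"
    using assms by (auto simp: list_eq_iff_nth_eq)
  then show ?thesis
    by (auto simp: hamming_def card_gt_0_iff)
qed

lemma hamming_flip_away:
  assumes "length x = n" "k < n" "x ! k = y ! k"
  shows "hamming n (flip x k) y = Suc (hamming n x y)"
proof -
  have "{i. i < n \<and> flip x k ! i \<noteq> y ! i} = insert k {i. i < n \<and> x ! i \<noteq> y ! i}"
    using assms by (auto simp: nth_list_update flip_def)
  then show ?thesis
    using assms by (simp add: hamming_def)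
qed

lemma hamming_flip_toward:
  assumes "length x = n" "k < n" "x ! k \<noteq> y ! k"
  shows "hamming n (flip x k) y < hamming n x y"
proof -
  let ?S = "{i. i < n \<and> x ! i \<noteq> y ! i}"
  have "{i. i < n \<and> flip x k ! i \<noteq> y ! i} = ?S - {k}"
    using assms by (auto simp: nth_list_update flip_def)
  moreover have "card (?S - {k}) < card ?S"
    using assms by (intro card_Diff1_less) simp_all
  ultimately show ?thesis
    by (simp add: hamming_def)
qed

lemma hamming_le: "hamming n x y \<le> n"
  unfolding hamming_def using card_mono[of "{..<n}" "{i. i < n \<and> x ! i \<noteq> y ! i}"] by auto

lemma obtain_farthest:
  assumes "w \<in> X"
  obtains v where "v \<in> X" "\<And>y. y \<in> X \<Longrightarrow> hamming n y w \<le> hamming n v w"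
  using ex_has_greatest_nat[of "\<lambda>y. y \<in> X" w "\<lambda>y. hamming n y w" "Suc n"] assms that
    hamming_le le_imp_less_Suc by blast

lemma farthest_neq:
  assumes "X \<subseteq> cube_space n" "w \<in> X" "y \<in> X" "y \<noteq> w"
    and "hamming n y w \<le> hamming n v w"
  shows "v \<noteq> w"
proof -
  have "0 < hamming n y w"
    using assms(1-4) by (intro hamming_pos) (auto intro: length_in_cube_space)
  then show ?thesis
    using assms(5) by auto
qed

definition cube_at :: "nat \<Rightarrow> nat set \<Rightarrow> bool list \<Rightarrow> bool list set" where
  "cube_at n K v = {x. length x = n \<and> (\<forall>i<n. i \<notin> K \<longrightarrow> x ! i = v ! i)}"

lemma self_in_cube_at: "length v = n \<Longrightarrow> v \<in> cube_at n K v"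
  by (simp add: cube_at_def)

lemma flip_in_cube_at: "x \<in> cube_at n K v \<Longrightarrow> k \<in> K \<Longrightarrow> flip x k \<in> cube_at n K v"
  by (auto simp: cube_at_def nth_flip)

lemma cube_at_mono: "K' \<subseteq> K \<Longrightarrow> p \<in> cube_at n K v \<Longrightarrow> cube_at n K' p \<subseteq> cube_at n K v"
  by (auto simp: cube_at_def)

lemma cube_at_empty: "length v = n \<Longrightarrow> cube_at n {} v = {v}"
  by (auto simp: cube_at_def intro: nth_equalityI)

lemma cube_at_two_dirsE:
  assumes x: "x \<in> cube_at n K v" and v: "length v = n" and K: "K \<subseteq> {a, b}"
    and ab: "a < n" "b < n"
  obtains "x = v" | "a \<in> K" "x = flip v a" | "b \<in> K" "x = flip v b"
    | "a \<in> K" "b \<in> K" "a \<noteq> b" "x = flip (flip v a) b"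
proof -
  have x_len: "length x = n"
    using x by (simp add: cube_at_def)
  have outside: "x ! i = v ! i" if "i < n" "i \<notin> K" for i
    using x that by (simp add: cube_at_def)
  have a: "a \<in> K" if "x ! a \<noteq> v ! a"
    using outside ab that by blast
  have b: "b \<in> K" if "x ! b \<noteq> v ! b"
    using outside ab that by blast
  have agree: "x ! i = v ! i" if "i < n" "i \<noteq> a" "i \<noteq> b" for i
    using outside K that by blast
  have eq: "x = y" if "length y = n" "x ! a = y ! a" "x ! b = y ! b"
    "\<And>i. i < n \<Longrightarrow> i \<noteq> a \<Longrightarrow> i \<noteq> b \<Longrightarrow> y ! i = v ! i" for y
    using list_eq_off_two[OF x_len that(1-3)] agree that(4) by simp
  consider "x ! a = v ! a" "x ! b = v ! b" | "x ! a \<noteq> v ! a" "x ! b = v ! b"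
    | "x ! a = v ! a" "x ! b \<noteq> v ! b" | "a = b" "x ! a \<noteq> v ! a"
    | "a \<noteq> b" "x ! a \<noteq> v ! a" "x ! b \<noteq> v ! b"
    by blast
  then show thesis
  proof cases
    case 1
    then show thesis using that(1) eq[of v] v by simp
  next
    case 2
    then have "a \<noteq> b" by auto
    with 2 show thesis using that(2) a eq[of "flip v a"] v ab by (simp add: nth_flip)
  next
    case 3
    then have "a \<noteq> b" by auto
    with 3 show thesis using that(3) b eq[of "flip v b"] v ab by (simp add: nth_flip)
  next
    case 4
    then show thesis using that(2) a eq[of "flip v a"] v ab by (simp add: nth_flip)
  next
    case 5
    then show thesis using that(4) a b eq[of "flip (flip v a) b"] v ab by (simp add: nth_flip)
  qed
qed

lemma is_cube_cube_at: "K \<subseteq> {..<n} \<Longrightarrow> length v = n \<Longrightarrow> is_cube n K (cube_at n K v)"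
  by (auto simp: is_cube_def cube_at_def)

lemma is_cube_eq_cube_at: "is_cube n K Q \<Longrightarrow> v \<in> Q \<Longrightarrow> Q = cube_at n K v"
  by (auto simp: is_cube_def cube_at_def)

definition edge_dirs :: "nat \<Rightarrow> bool list set \<Rightarrow> bool list \<Rightarrow> nat set" where
  "edge_dirs n D v = {k. k < n \<and> flip v k \<in> D}"

definition is_corner :: "nat \<Rightarrow> bool list set \<Rightarrow> bool list \<Rightarrow> bool" where
  "is_corner n D v \<longleftrightarrow> v \<in> D \<and> cube_at n (edge_dirs n D v) v \<subseteq> D"

lemma is_corner_isolated:
  assumes "v \<in> D" "length v = n" "\<And>k. k < n \<Longrightarrow> flip v k \<notin> D"
  shows "is_corner n D v"
proof -
  have "edge_dirs n D v = {}"
    using assms(3) by (auto simp: edge_dirs_def)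
  then show ?thesis
    using assms(1,2) by (simp add: is_corner_def cube_at_empty)
qed

lemma is_corner_two_dirs:
  assumes v: "v \<in> D" "length v = n" and ab: "a < n" "b < n"
    and dirs: "\<And>k. k < n \<Longrightarrow> flip v k \<in> D \<Longrightarrow> k = a \<or> k = b"
    and square: "flip v a \<in> D \<Longrightarrow> flip v b \<in> D \<Longrightarrow> flip (flip v a) b \<in> D"
  shows "is_corner n D v"
  unfolding is_corner_def
proof (intro conjI subsetI v(1))
  let ?K = "edge_dirs n D v"
  have K: "?K \<subseteq> {a, b}"
    using dirs by (auto simp: edge_dirs_def)
  fix x assume "x \<in> cube_at n ?K v"
  then show "x \<in> D"
    by (rule cube_at_two_dirsE[OF _ v(2) K ab]) (use v square in \<open>auto simp: edge_dirs_def\<close>)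
qed

lemma is_corner_superset:
  assumes "is_corner n D' c" "D' \<subseteq> D" "edge_dirs n D c \<subseteq> edge_dirs n D' c"
  shows "is_corner n D c"
proof -
  have "edge_dirs n D' c \<subseteq> edge_dirs n D c"
    using assms(2) by (auto simp: edge_dirs_def)
  then show ?thesis
    using assms by (auto simp: is_corner_def)
qed

lemma adj_in_cube_at_edge_dirs:
  assumes "w \<in> D" "oig_adj n v w"
  shows "w \<in> cube_at n (edge_dirs n D v) v"
proof -
  obtain k where k: "k < n" "w = flip v k"
    using assms(2) by (rule oig_adj_flip)
  have "length v = n"
    using assms(2) by (simp add: oig_adj_def)
  then show ?thesis
    using assms(1) k by (auto intro: flip_in_cube_at self_in_cube_at simp: edge_dirs_def)
qed

lemma is_corner_unique_max_cube:
  assumes corner: "is_corner n D v" and v: "length v = n"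
  shows "unique_max_cube n D v (cube_at n (edge_dirs n D v) v)"
proof -
  let ?K = "edge_dirs n D v"
  have "finite ?K"
    by (simp add: edge_dirs_def)
  have maximal: "card J \<le> card ?K \<and> (card J = card ?K \<longrightarrow> Q = cube_at n ?K v)"
    if Q: "is_cube n J Q" "Q \<subseteq> D" "v \<in> Q" for J Q
  proof -
    have Q_eq: "Q = cube_at n J v"
      using Q(1,3) by (rule is_cube_eq_cube_at)
    have "J \<subseteq> ?K"
    proof
      fix j assume "j \<in> J"
      moreover have "J \<subseteq> {..<n}"
        using Q(1) by (simp add: is_cube_def)
      moreover have "flip v j \<in> cube_at n J v"
        using \<open>j \<in> J\<close> v by (intro flip_in_cube_at self_in_cube_at)
      ultimately show "j \<in> ?K"
        using Q(2) Q_eq by (auto simp: edge_dirs_def)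
    qed
    then show ?thesis
      using Q_eq \<open>finite ?K\<close> card_subset_eq card_mono by metis
  qed
  have "is_cube n ?K (cube_at n ?K v)"
    using v by (intro is_cube_cube_at) (auto simp: edge_dirs_def)
  moreover have "cube_at n ?K v \<subseteq> D" "v \<in> cube_at n ?K v"
    using corner v self_in_cube_at by (auto simp: is_corner_def)
  ultimately show ?thesis
    unfolding unique_max_cube_def using maximal by blast
qed

section \<open>Isometric classes without shattered pairs\<close>

text \<open>Iterating the step towards w yields a geodesic of the cube inside the class, so the
  one-inclusion graph is an isometric subgraph of the cube.\<close>

definition isometric :: "nat \<Rightarrow> bool list set \<Rightarrow> bool" where
  "isometric n X \<longleftrightarrow> (\<forall>u\<in>X. \<forall>w\<in>X. u \<noteq> w \<longrightarrow> (\<exists>k<n. u ! k \<noteq> w ! k \<and> flip u k \<in> X))"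

definition no_shattered_pair :: "nat \<Rightarrow> bool list set \<Rightarrow> bool" where
  "no_shattered_pair n X \<longleftrightarrow>
     (\<forall>j<n. \<forall>k<n. j \<noteq> k \<longrightarrow> \<not> (\<forall>a b. \<exists>x\<in>X. x ! j = a \<and> x ! k = b))"

lemma isometric_empty: "isometric n {}"
  by (simp add: isometric_def)

lemma no_shattered_pair_empty: "no_shattered_pair n {}"
  by (simp add: no_shattered_pair_def)

lemma no_shattered_pair_subset:
  assumes "no_shattered_pair n X" "Y \<subseteq> X"
  shows "no_shattered_pair n Y"
  unfolding no_shattered_pair_def
proof (intro allI impI notI)
  fix j k assume jk: "j < n" "k < n" "j \<noteq> k" and Y: "\<forall>a b. \<exists>x\<in>Y. x ! j = a \<and> x ! k = b"
  have "\<exists>x\<in>X. x ! j = a \<and> x ! k = b" for a b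
    using Y assms(2) by blast
  then show False
    using assms(1) jk unfolding no_shattered_pair_def by blast
qed

lemma isometric_has_edge:
  assumes iso: "isometric n X" and X: "X \<subseteq> cube_space n" and "u \<in> X" "w \<in> X" "i < n"
    and "u ! i \<noteq> w ! i"
  shows "\<exists>x\<in>X. flip x i \<in> X"
  using assms(3,6)
proof (induction "hamming n u w" arbitrary: u rule: less_induct)
  case less
  have "u \<noteq> w"
    using less.prems(2) by blast
  then obtain k where k: "k < n" "u ! k \<noteq> w ! k" "flip u k \<in> X"
    using iso less.prems(1) \<open>w \<in> X\<close> unfolding isometric_def by blast
  show ?case
  proof (cases "k = i")
    case False
    have "length u = n"
      using X less.prems(1) length_in_cube_space by blast
    then have "hamming n (flip u k) w < hamming n u w"
      using hamming_flip_toward k(1,2) by blast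
    moreover have "flip u k ! i \<noteq> w ! i"
      using False less.prems(2) by simp
    ultimately show ?thesis
      using less.hyps k(3) by blast
  qed (use k less.prems in blast)
qed

lemma isometric_flip_image:
  assumes iso: "isometric n X" and X: "X \<subseteq> cube_space n" and j: "j < n"
  shows "isometric n ((\<lambda>x. flip x j) ` X)"
  unfolding isometric_def
proof (intro ballI impI)
  fix u w assume "u \<in> (\<lambda>x. flip x j) ` X" "w \<in> (\<lambda>x. flip x j) ` X" "u \<noteq> w"
  then obtain u' w' where u': "u' \<in> X" "u = flip u' j" and w': "w' \<in> X" "w = flip w' j" "u' \<noteq> w'"
    by blast
  then obtain k where k: "k < n" "u' ! k \<noteq> w' ! k" "flip u' k \<in> X"
    using iso unfolding isometric_def by blast
  have "u ! k \<noteq> w ! k"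
    using u' w' k X length_in_cube_space by (auto simp: nth_flip)
  moreover have "flip u k \<in> (\<lambda>x. flip x j) ` X"
    using k(3) u'(2) flip_commute by blast
  ultimately show "\<exists>k<n. u ! k \<noteq> w ! k \<and> flip u k \<in> (\<lambda>x. flip x j) ` X"
    using k(1) by blast
qed

text \<open>Neighbours of v in directions k and l both point away from w, and together with v and w
  they would shatter {k, l}.\<close>

lemma farthest_neighbour_unique:
  assumes X: "no_shattered_pair n X" "X \<subseteq> cube_space n" and "w \<in> X" "v \<in> X"
    and far: "\<And>y. y \<in> X \<Longrightarrow> hamming n y w \<le> hamming n v w"
    and k: "k < n" "flip v k \<in> X" and l: "l < n" "flip v l \<in> X"
  shows "k = l"
proof (rule ccontr)
  assume "k \<noteq> l"
  have v_len: "length v = n"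
    using X(2) \<open>v \<in> X\<close> length_in_cube_space by blast
  have away: "v ! m \<noteq> w ! m" if "m < n" "flip v m \<in> X" for m
    using hamming_flip_away[OF v_len that(1)] far[OF that(2)] by fastforce
  have "\<exists>x\<in>{v, flip v k, flip v l, w}. x ! k = a \<and> x ! l = b" for a b
    using away[OF k] away[OF l] \<open>k \<noteq> l\<close> v_len k(1) l(1)
    by (cases "a = v ! k"; cases "b = v ! l") auto
  then have "\<exists>x\<in>X. x ! k = a \<and> x ! l = b" for a b
    using \<open>w \<in> X\<close> \<open>v \<in> X\<close> k(2) l(2) by blast
  then show False
    using X(1) k(1) l(1) \<open>k \<noteq> l\<close> unfolding no_shattered_pair_def by blast
qed

definition halfspace :: "bool list set \<Rightarrow> nat \<Rightarrow> bool \<Rightarrow> bool list set" where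
  "halfspace D j a = {x\<in>D. x ! j = a}"

text \<open>The side a of the reduction of D in direction j.\<close>

definition edge_side :: "bool list set \<Rightarrow> nat \<Rightarrow> bool \<Rightarrow> bool list set" where
  "edge_side D j a = {x\<in>D. x ! j = a \<and> flip x j \<in> D}"

lemma halfspace_subset: "halfspace D j a \<subseteq> D"
  by (auto simp: halfspace_def)

lemma edge_side_subset_halfspace: "edge_side D j a \<subseteq> halfspace D j a"
  by (auto simp: edge_side_def halfspace_def)

lemma isometric_halfspace:
  assumes "isometric n X"
  shows "isometric n (halfspace X i a)"
  unfolding isometric_def
proof (intro ballI impI)
  fix u w assume u: "u \<in> halfspace X i a" and w: "w \<in> halfspace X i a" and "u \<noteq> w"
  then obtain k where k: "k < n" "u ! k \<noteq> w ! k" "flip u k \<in> X"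
    using assms unfolding isometric_def halfspace_def by blast
  moreover have "k \<noteq> i"
    using u w k(2) by (auto simp: halfspace_def)
  ultimately show "\<exists>k<n. u ! k \<noteq> w ! k \<and> flip u k \<in> halfspace X i a"
    using u by (auto simp: halfspace_def)
qed

text \<open>A step from u that would land on c is replaced by a step along the square spanned at c,
  which lies in the cube of c.\<close>

lemma isometric_remove_corner:
  assumes iso: "isometric n X" and X: "X \<subseteq> cube_space n" and corner: "is_corner n X c"
  shows "isometric n (X - {c})"
  unfolding isometric_def
proof (intro ballI impI)
  fix u w assume u: "u \<in> X - {c}" and w: "w \<in> X - {c}" and "u \<noteq> w"
  then obtain k where k: "k < n" "u ! k \<noteq> w ! k" "flip u k \<in> X"
    using iso unfolding isometric_def by blast
  show "\<exists>k<n. u ! k \<noteq> w ! k \<and> flip u k \<in> X - {c}"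
  proof (cases "flip u k = c")
    case True
    have u_len: "length u = n"
      using u X length_in_cube_space by blast
    then have u_eq: "u = flip c k"
      using True k(1) by auto
    have "c \<in> X" "c \<noteq> w"
      using corner w by (auto simp: is_corner_def)
    then obtain l where l: "l < n" "c ! l \<noteq> w ! l" "flip c l \<in> X"
      using iso w unfolding isometric_def by blast
    have "c ! k = w ! k"
      using True k(2) u_len k(1) by auto
    then have "k \<noteq> l"
      using l(2) by blast
    have "k \<in> edge_dirs n X c" "l \<in> edge_dirs n X c"
      using k(1) l u u_eq by (auto simp: edge_dirs_def)
    then have "flip u l \<in> cube_at n (edge_dirs n X c) c"
      using u_eq u_len by (auto intro!: flip_in_cube_at self_in_cube_at)
    then have "flip u l \<in> X"
      using corner by (auto simp: is_corner_def)
    moreover have "flip u l \<noteq> c"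
      using \<open>k \<noteq> l\<close> u_eq u_len k(1) by (metis flip_neq length_flip nth_flip_other nth_flip_same)
    moreover have "u ! l \<noteq> w ! l"
      using u_eq \<open>k \<noteq> l\<close> l(2) by simp
    ultimately show ?thesis
      using l(1) by blast
  qed (use k in blast)
qed

section \<open>Corners of tame classes\<close>

definition tame :: "nat \<Rightarrow> bool list set \<Rightarrow> bool" where
  "tame n D \<longleftrightarrow> D \<subseteq> cube_space n \<and>
     (\<forall>j<n. \<forall>a. isometric n (edge_side D j a) \<and> no_shattered_pair n (edge_side D j a))"

lemma tameI:
  assumes "D \<subseteq> cube_space n"
    and "\<And>j a. j < n \<Longrightarrow> isometric n (edge_side D j a)"
    and "\<And>j a. j < n \<Longrightarrow> no_shattered_pair n (edge_side D j a)"
  shows "tame n D"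
  using assms by (simp add: tame_def)

lemma tame_cube_space: "tame n D \<Longrightarrow> D \<subseteq> cube_space n"
  by (simp add: tame_def)

lemma tame_edge_side:
  "tame n D \<Longrightarrow> j < n \<Longrightarrow> isometric n (edge_side D j a) \<and> no_shattered_pair n (edge_side D j a)"
  by (simp add: tame_def)

lemma edge_side_halfspace_other:
  "j \<noteq> i \<Longrightarrow> edge_side (halfspace D i a) j b = halfspace (edge_side D j b) i a"
  by (auto simp: edge_side_def halfspace_def)

lemma edge_side_halfspace_same:
  assumes "D \<subseteq> cube_space n" "i < n"
  shows "edge_side (halfspace D i a) i b = {}"
  using assms length_in_cube_space by (fastforce simp: edge_side_def halfspace_def)

lemma tame_halfspace:
  assumes tame: "tame n D" and i: "i < n"
  shows "tame n (halfspace D i a)"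
proof (rule tameI)
  have D: "D \<subseteq> cube_space n"
    using tame by (rule tame_cube_space)
  then show "halfspace D i a \<subseteq> cube_space n"
    using halfspace_subset by blast
  fix j b assume j: "j < n"
  show "isometric n (edge_side (halfspace D i a) j b)"
    using edge_side_halfspace_same[OF D i] edge_side_halfspace_other tame_edge_side[OF tame j]
    by (cases "j = i") (simp_all add: isometric_empty isometric_halfspace)
  show "no_shattered_pair n (edge_side (halfspace D i a) j b)"
    using edge_side_halfspace_same[OF D i] edge_side_halfspace_other tame_edge_side[OF tame j]
    by (cases "j = i") (simp_all add: no_shattered_pair_empty no_shattered_pair_subset[OF _ halfspace_subset])
qed

lemma edge_side_remove:
  assumes "D \<subseteq> cube_space n" "j < n"
  shows "edge_side (D - {c}) j b = edge_side D j b - {c, flip c j}"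
  using assms length_in_cube_space by (fastforce simp: edge_side_def)

text \<open>The cube of p in the edge side is the face of the cube of c on the side of p.\<close>

lemma is_corner_edge_side:
  assumes D: "D \<subseteq> cube_space n" and corner: "is_corner n D c" and j: "j < n" "flip c j \<in> D"
    and p: "p \<in> {c, flip c j}" "p ! j = b"
  shows "is_corner n (edge_side D j b) p"
proof -
  let ?K = "edge_dirs n D c" and ?N = "edge_side D j b"
  have c_len: "length c = n"
    using corner D length_in_cube_space by (auto simp: is_corner_def)
  have cube: "cube_at n ?K c \<subseteq> D"
    using corner by (simp add: is_corner_def)
  have "j \<in> ?K"
    using j by (simp add: edge_dirs_def)
  then have p_cube: "p \<in> cube_at n ?K c"
    using p(1) c_len by (auto intro: flip_in_cube_at self_in_cube_at)
  have dirs: "edge_dirs n ?N p \<subseteq> ?K"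
  proof
    fix k assume "k \<in> edge_dirs n ?N p"
    then have k: "k < n" "flip p k \<in> D" "flip (flip p k) j \<in> D"
      by (auto simp: edge_dirs_def edge_side_def)
    then have "flip c k \<in> D"
      using p(1) c_len j(1) flip_commute by auto
    then show "k \<in> ?K"
      using k(1) by (simp add: edge_dirs_def)
  qed
  have "j \<notin> edge_dirs n ?N p"
    using p c_len j(1) by (auto simp: edge_dirs_def edge_side_def)
  have "x \<in> ?N" if x: "x \<in> cube_at n (edge_dirs n ?N p) p" for x
  proof -
    have "x \<in> cube_at n ?K c"
      using cube_at_mono[OF dirs p_cube] x by blast
    moreover have "x ! j = b"
      using x \<open>j \<notin> edge_dirs n ?N p\<close> j(1) p(2) by (simp add: cube_at_def)
    ultimately show ?thesis
      using cube \<open>j \<in> ?K\<close> flip_in_cube_at by (auto simp: edge_side_def)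
  qed
  moreover have "p \<in> ?N"
    using p_cube cube \<open>j \<in> ?K\<close> p(2) flip_in_cube_at by (auto simp: edge_side_def)
  ultimately show ?thesis
    by (auto simp: is_corner_def)
qed

lemma tame_remove_corner:
  assumes tame: "tame n D" and corner: "is_corner n D c"
  shows "tame n (D - {c})"
proof (rule tameI)
  have D: "D \<subseteq> cube_space n"
    using tame by (rule tame_cube_space)
  then show "D - {c} \<subseteq> cube_space n"
    by blast
  fix j b assume j: "j < n"
  let ?N = "edge_side D j b"
  have N: "isometric n ?N" "no_shattered_pair n ?N"
    using tame_edge_side[OF tame j] by auto
  have removed: "edge_side (D - {c}) j b = ?N - {c, flip c j}"
    using edge_side_remove[OF D j] .
  then show "no_shattered_pair n (edge_side (D - {c}) j b)"
    using N(2) by (auto intro: no_shattered_pair_subset)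
  show "isometric n (edge_side (D - {c}) j b)"
  proof (cases "flip c j \<in> D")
    case False
    then have "c \<notin> ?N" "flip c j \<notin> ?N"
      by (auto simp: edge_side_def)
    then have "edge_side (D - {c}) j b = ?N"
      using removed by blast
    then show ?thesis
      using N(1) by simp
  next
    case True
    have c_len: "length c = n"
      using corner D length_in_cube_space by (auto simp: is_corner_def)
    define p where "p = (if c ! j = b then c else flip c j)"
    have p: "p \<in> {c, flip c j}" "p ! j = b"
      using c_len j by (auto simp: p_def)
    have pair: "{c, flip c j} = {p, flip p j}"
      using c_len j by (auto simp: p_def)
    have "flip p j \<notin> ?N"
      using p(2) c_len j by (simp add: edge_side_def p_def)
    then have "?N - {p, flip p j} = ?N - {p}"
      by auto
    then have "edge_side (D - {c}) j b = ?N - {p}"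
      using removed pair by simp
    moreover have "?N \<subseteq> cube_space n"
      using D by (auto simp: edge_side_def)
    ultimately show ?thesis
      using isometric_remove_corner[OF N(1) _ is_corner_edge_side[OF D corner j True p]] by simp
  qed
qed

text \<open>If every point of a halfspace has its neighbour across the boundary, a point of the
  halfspace farthest from w is a leaf of the halfspace, and the square it spans with the
  boundary edge closes because its neighbour also has a partner across the boundary.\<close>

lemma corner_in_crossed_halfspace:
  assumes D: "D \<subseteq> cube_space n" and i: "i < n"
    and crossed: "edge_side D i a = halfspace D i a"
    and no_pair: "no_shattered_pair n (halfspace D i a)" and w: "w \<in> halfspace D i a"
  shows "\<exists>v\<in>halfspace D i a. is_corner n D v \<and> (halfspace D i a \<noteq> {w} \<longrightarrow> v \<noteq> w)"
proof -
  let ?H = "halfspace D i a"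
  have H: "?H \<subseteq> cube_space n"
    using D halfspace_subset by blast
  obtain v where v: "v \<in> ?H" and far: "\<And>y. y \<in> ?H \<Longrightarrow> hamming n y w \<le> hamming n v w"
    using obtain_farthest[OF w] by blast
  have v_len: "length v = n"
    using v H length_in_cube_space by blast
  have vD: "v \<in> D" "v ! i = a"
    using v by (auto simp: halfspace_def)
  have in_H: "flip v k \<in> ?H" if "k \<noteq> i" "flip v k \<in> D" for k
    using that vD by (simp add: halfspace_def)
  have "is_corner n D v"
  proof (cases "\<exists>k<n. k \<noteq> i \<and> flip v k \<in> D")
    case True
    then obtain k where k: "k < n" "k \<noteq> i" "flip v k \<in> D"
      by blast
    show ?thesis
    proof (rule is_corner_two_dirs[OF vD(1) v_len i k(1)])
      fix m assume m: "m < n" "flip v m \<in> D"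
      show "m = i \<or> m = k"
        using farthest_neighbour_unique[OF no_pair H w v far m(1) _ k(1)] in_H m(2) k(2,3)
        by blast
    next
      have "flip v k \<in> edge_side D i a"
        using crossed in_H k(2,3) by simp
      then show "flip (flip v i) k \<in> D"
        by (simp add: edge_side_def flip_commute)
    qed
  next
    case False
    show ?thesis
      by (rule is_corner_two_dirs[OF vD(1) v_len i i]) (use False v_len i vD in auto)
  qed
  moreover have "v \<noteq> w" if "?H \<noteq> {w}"
    using that w farthest_neq[OF H w _ _ far] by blast
  ultimately show ?thesis
    using v by blast
qed

lemma is_corner_halfspace_lift:
  assumes "c \<in> halfspace D i a" "c \<notin> edge_side D i a" "is_corner n (halfspace D i a) c"
  shows "is_corner n D c"
proof (rule is_corner_superset[OF assms(3) halfspace_subset])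
  show "edge_dirs n D c \<subseteq> edge_dirs n (halfspace D i a) c"
  proof
    fix k assume k: "k \<in> edge_dirs n D c"
    then have "k \<noteq> i"
      using assms(1,2) by (auto simp: edge_dirs_def edge_side_def halfspace_def)
    then show "k \<in> edge_dirs n (halfspace D i a) c"
      using k assms(1) by (simp add: edge_dirs_def halfspace_def)
  qed
qed

lemma is_corner_remove_lift:
  assumes "is_corner n (D - {l}) c" "\<And>k. k < n \<Longrightarrow> flip c k \<noteq> l"
  shows "is_corner n D c"
  by (rule is_corner_superset[OF assms(1) Diff_subset]) (use assms(2) in \<open>auto simp: edge_dirs_def\<close>)

lemma corner_in_halfspace:
  assumes tame: "tame n D" and i: "i < n" and w: "w \<in> halfspace D i a"
    and IH: "edge_side D i a \<noteq> halfspace D i a \<Longrightarrow>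
      \<exists>c\<in>halfspace D i a - edge_side D i a. is_corner n (halfspace D i a) c"
  shows "\<exists>c\<in>halfspace D i a. is_corner n D c \<and>
    (c = w \<longrightarrow> w \<notin> edge_side D i a \<or> halfspace D i a = {w})"
proof (cases "edge_side D i a = halfspace D i a")
  case True
  then have "no_shattered_pair n (halfspace D i a)"
    using tame_edge_side[OF tame i] by metis
  then show ?thesis
    using corner_in_crossed_halfspace[OF tame_cube_space[OF tame] i True _ w] by blast
next
  case False
  then obtain c where "c \<in> halfspace D i a - edge_side D i a" "is_corner n (halfspace D i a) c"
    using IH by blast
  then show ?thesis
    using is_corner_halfspace_lift by blast
qed

lemma obtain_leaf:
  assumes iso: "isometric n T" and no_pair: "no_shattered_pair n T" and T: "T \<subseteq> cube_space n"
    and edge: "x \<in> T" "j < n" "flip x j \<in> T"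
  obtains l i where "l \<in> T" "i < n" "flip l i \<in> T" "\<And>k. k < n \<Longrightarrow> flip l k \<in> T \<Longrightarrow> k = i"
    "\<And>t. t \<in> T \<Longrightarrow> t ! i = l ! i \<Longrightarrow> t = l"
proof -
  obtain l where l: "l \<in> T" and far: "\<And>y. y \<in> T \<Longrightarrow> hamming n y x \<le> hamming n l x"
    using obtain_farthest[OF edge(1)] by blast
  have "flip x j \<noteq> x"
    using edge T length_in_cube_space by (auto simp: flip_neq)
  then have "l \<noteq> x"
    using farthest_neq[OF T edge(1) edge(3) _ far[OF edge(3)]] by blast
  then obtain i where i: "i < n" "l ! i \<noteq> x ! i" "flip l i \<in> T"
    using iso l edge(1) unfolding isometric_def by blast
  have unique: "k = i" if "k < n" "flip l k \<in> T" for k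
    using farthest_neighbour_unique[OF no_pair T edge(1) l far that i(1,3)] .
  have "t = l" if t: "t \<in> T" "t ! i = l ! i" for t
  proof (rule ccontr)
    assume "t \<noteq> l"
    then obtain k where "k < n" "l ! k \<noteq> t ! k" "flip l k \<in> T"
      using iso l t(1) unfolding isometric_def by metis
    then show False
      using unique t(2) by blast
  qed
  then show thesis
    using that l i unique by blast
qed

lemma corner_outside_edgeless:
  assumes tame: "tame n D" and T: "T \<subseteq> D" "isometric n T" "T \<noteq> D"
    and edgeless: "\<And>i x. i < n \<Longrightarrow> x \<in> T \<Longrightarrow> flip x i \<notin> T"
    and IH: "\<And>i a. i < n \<Longrightarrow> halfspace D i a \<noteq> D \<Longrightarrow> edge_side D i a \<noteq> halfspace D i a \<Longrightarrow>
      \<exists>c\<in>halfspace D i a - edge_side D i a. is_corner n (halfspace D i a) c"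
  shows "\<exists>c\<in>D - T. is_corner n D c"
proof (cases "\<exists>i<n. \<exists>x\<in>D. flip x i \<in> D")
  case True
  then obtain i x where i: "i < n" and x: "x \<in> D" "flip x i \<in> D"
    by blast
  have D: "D \<subseteq> cube_space n"
    using tame by (rule tame_cube_space)
  have same_side: "t ! i = t' ! i" if tt: "t \<in> T" "t' \<in> T" for t t'
  proof (rule ccontr)
    assume "t ! i \<noteq> t' ! i"
    moreover have "T \<subseteq> cube_space n"
      using T(1) D by blast
    ultimately obtain y where "y \<in> T" "flip y i \<in> T"
      using isometric_has_edge[OF T(2) _ tt i] by blast
    then show False
      using edgeless[OF i] by blast
  qed
  obtain b where b: "\<And>t. t \<in> T \<Longrightarrow> t ! i = b"
    using same_side by blast
  let ?a = "\<not> b"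
  have "x ! i \<noteq> flip x i ! i"
    using x(1) i D length_in_cube_space by auto
  then obtain w w' where w: "w \<in> halfspace D i ?a" and "w' \<in> D - halfspace D i ?a"
    using x by (auto simp: halfspace_def)
  then have "halfspace D i ?a \<noteq> D"
    by blast
  then obtain c where "c \<in> halfspace D i ?a" "is_corner n D c"
    using corner_in_halfspace[OF tame i w IH[OF i]] by blast
  moreover have "c \<notin> T"
    using b calculation(1) by (auto simp: halfspace_def)
  ultimately show ?thesis
    using halfspace_subset by blast
next
  case False
  obtain c where "c \<in> D" "c \<notin> T"
    using T(1,3) by blast
  moreover have "length c = n"
    using tame_cube_space[OF tame] \<open>c \<in> D\<close> length_in_cube_space by blast
  ultimately show ?thesis
    using False is_corner_isolated by blast
qed

lemma is_corner_remove_leaf_lift: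
  assumes D: "D \<subseteq> cube_space n" and T: "T \<subseteq> D" "flip l i \<in> T"
    and alone: "halfspace D i (l ! i) = {l}"
    and c: "c \<in> (D - {l}) - (T - {l})" "is_corner n (D - {l}) c"
  shows "is_corner n D c"
proof (rule is_corner_remove_lift[OF c(2)])
  fix k assume k: "k < n"
  show "flip c k \<noteq> l"
  proof
    assume "flip c k = l"
    then have "c = flip l k"
      using c(1) D length_in_cube_space k by auto
    moreover have "k = i"
    proof (rule ccontr)
      assume "k \<noteq> i"
      then have "flip l k \<in> halfspace D i (l ! i)"
        using c(1) \<open>c = flip l k\<close> by (simp add: halfspace_def)
      then show False
        using alone c(1) \<open>c = flip l k\<close> by auto
    qed
    ultimately show False
      using c(1) T(2) by auto
  qed
qed

lemma corner_outside_leaf: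
  assumes tame: "tame n D" and T: "T \<subseteq> D" "isometric n T" "no_shattered_pair n T"
    and edge: "x \<in> T" "j < n" "flip x j \<in> T"
    and IH_halfspace: "\<And>i a. i < n \<Longrightarrow> halfspace D i a \<noteq> D \<Longrightarrow>
      edge_side D i a \<noteq> halfspace D i a \<Longrightarrow>
      \<exists>c\<in>halfspace D i a - edge_side D i a. is_corner n (halfspace D i a) c"
    and IH_remove: "\<And>l. l \<in> T \<Longrightarrow> is_corner n D l \<Longrightarrow> isometric n (T - {l}) \<Longrightarrow>
      \<exists>c\<in>(D - {l}) - (T - {l}). is_corner n (D - {l}) c"
  shows "\<exists>c\<in>D - T. is_corner n D c"
proof -
  have D: "D \<subseteq> cube_space n"
    using tame by (rule tame_cube_space)
  then have T_cube: "T \<subseteq> cube_space n"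
    using T(1) by blast
  obtain l i where l: "l \<in> T" "i < n" "flip l i \<in> T"
    and leaf: "\<And>k. k < n \<Longrightarrow> flip l k \<in> T \<Longrightarrow> k = i"
    and side: "\<And>t. t \<in> T \<Longrightarrow> t ! i = l ! i \<Longrightarrow> t = l"
    using obtain_leaf[OF T(2,3) T_cube edge] by blast
  have l_len: "length l = n"
    using l(1) T_cube length_in_cube_space by blast
  let ?H = "halfspace D i (l ! i)"
  have l_H: "l \<in> ?H" "l \<in> edge_side D i (l ! i)"
    using l T(1) by (auto simp: halfspace_def edge_side_def)
  have "flip l i \<notin> ?H"
    using l_len l(2) by (simp add: halfspace_def)
  then have "?H \<noteq> D"
    using l(3) T(1) by blast
  then obtain c where c: "c \<in> ?H" "is_corner n D c" "c = l \<longrightarrow> ?H = {l}"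
    using corner_in_halfspace[OF tame l(2) l_H(1) IH_halfspace[OF l(2)]] l_H(2) by blast
  show ?thesis
  proof (cases "c = l")
    case False
    then have "c \<notin> T"
      using side c(1) by (auto simp: halfspace_def)
    then show ?thesis
      using c(1,2) halfspace_subset by blast
  next
    case True
    have "is_corner n T l"
    proof (rule is_corner_two_dirs[OF l(1) l_len l(2) l(2)])
      show "flip (flip l i) i \<in> T"
        using l l_len by simp
    qed (use leaf in blast)
    then obtain c' where c': "c' \<in> (D - {l}) - (T - {l})" "is_corner n (D - {l}) c'"
      using IH_remove[OF l(1)] c(2) True isometric_remove_corner[OF T(2) T_cube] by blast
    then show ?thesis
      using is_corner_remove_leaf_lift[OF D T(1) l(3) _ c'] c(3) True c'(1) by blast
  qed
qed

lemma tame_corner_outside: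
  assumes "tame n D" "T \<subseteq> D" "isometric n T" "no_shattered_pair n T" "T \<noteq> D"
  shows "\<exists>c\<in>D - T. is_corner n D c"
  using assms
proof (induction "card D" arbitrary: D T rule: less_induct)
  case less
  have fin: "finite D"
    using less.prems(1) tame_cube_space finite_subset_cube_space by blast
  have IH_halfspace: "\<exists>c\<in>halfspace D i a - edge_side D i a. is_corner n (halfspace D i a) c"
    if "i < n" "halfspace D i a \<noteq> D" "edge_side D i a \<noteq> halfspace D i a" for i a
  proof (rule less.hyps)
    show "card (halfspace D i a) < card D"
      using that(2) fin halfspace_subset by (simp add: psubset_card_mono psubset_eq)
  qed (use that tame_halfspace[OF less.prems(1)] tame_edge_side[OF less.prems(1)]
      edge_side_subset_halfspace in auto)
  have IH_remove: "\<exists>c\<in>(D - {l}) - (T - {l}). is_corner n (D - {l}) c"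
    if "l \<in> T" "is_corner n D l" "isometric n (T - {l})" for l
  proof (rule less.hyps)
    show "card (D - {l}) < card D"
      using that(1) less.prems(2) by (intro card_Diff1_less[OF fin]) blast
    show "T - {l} \<noteq> D - {l}"
      using that(1) less.prems(2,5) by blast
  qed (use that less.prems tame_remove_corner no_shattered_pair_subset in auto)
  show ?case
  proof (cases "\<exists>i<n. \<exists>x\<in>T. flip x i \<in> T")
    case True
    then show ?thesis
      using corner_outside_leaf[OF less.prems(1-4) _ _ _ IH_halfspace IH_remove] by blast
  next
    case False
    then show ?thesis
      using corner_outside_edgeless[OF less.prems(1-3,5) _ IH_halfspace] by blast
  qed
qed

lemma tame_corner_sequence:
  assumes "tame n D"
  shows "\<exists>vs. distinct vs \<and> set vs = D \<and> (\<forall>t<length vs. is_corner n (D - set (take t vs)) (vs ! t))"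
  using assms
proof (induction "card D" arbitrary: D rule: less_induct)
  case less
  show ?case
  proof (cases "D = {}")
    case False
    obtain c where c: "c \<in> D" "is_corner n D c"
      using tame_corner_outside[OF less.prems empty_subsetI isometric_empty no_shattered_pair_empty]
        False by blast
    have "card (D - {c}) < card D"
      using c(1) less.prems tame_cube_space finite_subset_cube_space by (meson card_Diff1_less)
    then obtain vs where vs: "distinct vs" "set vs = D - {c}"
      "\<forall>t<length vs. is_corner n (D - {c} - set (take t vs)) (vs ! t)"
      using less.hyps tame_remove_corner[OF less.prems c(2)] by blast
    have "is_corner n (D - set (take t (c # vs))) ((c # vs) ! t)" if "t < length (c # vs)" for t
      using that c(2) vs(3) by (cases t) (auto simp: set_diff_eq)
    then show ?thesis
      using vs c(1) by (intro exI[of _ "c # vs"]) auto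
  qed simp
qed

lemma tame_corner_peelable:
  assumes "tame n C"
  shows "corner_peelable n C"
proof -
  obtain vs where vs: "distinct vs" "set vs = C"
    and corners: "\<And>t. t < length vs \<Longrightarrow> is_corner n (C - set (take t vs)) (vs ! t)"
    using tame_corner_sequence[OF assms] by blast
  have "vs ! t \<in> cube_space n" if "t < length vs" for t
    using that vs(2) tame_cube_space[OF assms] by auto
  then have "corner_peeling n C vs"
    unfolding corner_peeling_def Let_def
    using vs corners is_corner_unique_max_cube adj_in_cube_at_edge_dirs length_in_cube_space
    by blast
  then show ?thesis
    unfolding corner_peelable_def by blast
qed

section \<open>Maximum classes\<close>

definition supported :: "nat \<Rightarrow> nat set \<Rightarrow> bool list set \<Rightarrow> bool" where
  "supported n A X \<longleftrightarrow> X \<subseteq> cube_space n \<and> (\<forall>x\<in>X. \<forall>i<n. i \<notin> A \<longrightarrow> \<not> x ! i)"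

definition vc_bounded :: "nat \<Rightarrow> nat set \<Rightarrow> nat \<Rightarrow> bool list set \<Rightarrow> bool" where
  "vc_bounded n A d X \<longleftrightarrow> (\<forall>S\<subseteq>A. card S = Suc d \<longrightarrow> \<not> shatters n X S)"

definition sauer_bound :: "nat \<Rightarrow> nat \<Rightarrow> nat" where
  "sauer_bound d m = (\<Sum>k\<le>d. m choose k)"

definition maximum_on :: "nat \<Rightarrow> nat set \<Rightarrow> nat \<Rightarrow> bool list set \<Rightarrow> bool" where
  "maximum_on n A d X \<longleftrightarrow> supported n A X \<and> vc_bounded n A d X \<and> card X = sauer_bound d (card A)"

text \<open>Projection and reduction along a coordinate j are kept inside the cube: the projection
  sets coordinate j to False, and the reduction is represented by the points with j False.\<close>

definition project :: "bool list set \<Rightarrow> nat \<Rightarrow> bool list set" where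
  "project X j = (\<lambda>x. x[j := False]) ` X"

definition reduction :: "bool list set \<Rightarrow> nat \<Rightarrow> bool list set" where
  "reduction X j = {x\<in>X. \<not> x ! j \<and> x[j := True] \<in> X}"

lemma sauer_bound_0_left [simp]: "sauer_bound 0 m = 1"
  by (simp add: sauer_bound_def)

lemma sauer_bound_0_right [simp]: "sauer_bound d 0 = 1"
  by (induction d) (simp_all add: sauer_bound_def)

lemma sauer_bound_Suc_Suc: "sauer_bound (Suc d) (Suc m) = sauer_bound (Suc d) m + sauer_bound d m"
  by (induction d) (simp_all add: sauer_bound_def)

lemma supported_length: "supported n A X \<Longrightarrow> x \<in> X \<Longrightarrow> length x = n"
  by (auto simp: supported_def length_in_cube_space)

lemma supported_outside: "supported n A X \<Longrightarrow> x \<in> X \<Longrightarrow> i < n \<Longrightarrow> i \<notin> A \<Longrightarrow> \<not> x ! i"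
  by (simp add: supported_def)

lemma card_project_reduction:
  assumes X: "X \<subseteq> cube_space n" and j: "j < n"
  shows "card X = card (project X j) + card (reduction X j)"
proof -
  let ?F = "{x\<in>X. \<not> x ! j}" and ?T = "{x\<in>X. x ! j}" and ?clear = "\<lambda>x. x[j := False]"
  have fin: "finite X"
    using X by (rule finite_subset_cube_space)
  have len: "\<And>x. x \<in> X \<Longrightarrow> length x = n"
    using X length_in_cube_space by blast
  have set_back: "(x[j := False])[j := True] = x" if "x \<in> ?T" for x
    using that by (simp add: list_update_nth_self)
  have "X = ?F \<union> ?T" "?F \<inter> ?T = {}"
    by auto
  then have "card X = card ?F + card ?T"
    using fin card_Un_disjoint[of ?F ?T] by simp
  moreover have "project X j = ?F \<union> ?clear ` ?T"
  proof -
    have "?clear ` ?F = ?F"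
      by (auto simp: list_update_nth_self image_iff)
    then show ?thesis
      unfolding project_def by blast
  qed
  moreover have "?F \<inter> ?clear ` ?T = reduction X j"
  proof
    show "?F \<inter> ?clear ` ?T \<subseteq> reduction X j"
      using set_back by (auto simp: reduction_def)
    show "reduction X j \<subseteq> ?F \<inter> ?clear ` ?T"
    proof
      fix y assume y: "y \<in> reduction X j"
      then have "y[j := True] \<in> ?T" "y = ?clear (y[j := True])"
        using len j by (auto simp: reduction_def list_update_nth_self)
      then have "y \<in> ?clear ` ?T"
        by (rule_tac image_eqI) simp_all
      then show "y \<in> ?F \<inter> ?clear ` ?T"
        using y unfolding reduction_def by blast
    qed
  qed
  moreover have "inj_on ?clear ?T"
    by (rule inj_on_inverseI[where g = "\<lambda>x. x[j := True]"]) (rule set_back)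
  then have "card (?clear ` ?T) = card ?T"
    by (rule card_image)
  ultimately show ?thesis
    using card_Un_Int[of ?F "?clear ` ?T"] fin by simp
qed

lemma supported_project:
  assumes "supported n A X" "j < n"
  shows "supported n (A - {j}) (project X j)"
  unfolding supported_def
proof (intro conjI ballI allI impI subsetI)
  fix y assume "y \<in> project X j"
  then obtain x where x: "x \<in> X" "y = x[j := False]"
    by (auto simp: project_def)
  then show "y \<in> cube_space n"
    using assms(1) supported_length by (simp add: cube_space_def)
  fix i assume "i < n" "i \<notin> A - {j}"
  then show "\<not> y ! i"
    using x assms supported_outside supported_length by (cases "i = j") auto
qed

lemma supported_reduction: "supported n A X \<Longrightarrow> supported n (A - {j}) (reduction X j)"
  by (auto simp: supported_def reduction_def)

lemma vc_bounded_project: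
  assumes "vc_bounded n A d X"
  shows "vc_bounded n (A - {j}) d (project X j)"
  unfolding vc_bounded_def
proof (intro allI impI notI)
  fix S assume S: "S \<subseteq> A - {j}" "card S = Suc d" and shattered: "shatters n (project X j) S"
  have "shatters n X S"
    unfolding shatters_def
  proof (intro conjI allI impI)
    show "S \<subseteq> {..<n}"
      using shattered by (simp add: shatters_def)
    fix U assume "U \<subseteq> S"
    then have "\<exists>c\<in>project X j. \<forall>i\<in>S. c ! i = (i \<in> U)"
      using shattered unfolding shatters_def by blast
    then obtain x where x: "x \<in> X" "\<forall>i\<in>S. x[j := False] ! i = (i \<in> U)"
      by (auto simp: project_def)
    have "x[j := False] ! i = x ! i" if "i \<in> S" for i
    proof -
      have "i \<noteq> j"
        using that S(1) by blast
      then show ?thesis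
        by simp
    qed
    then show "\<exists>c\<in>X. \<forall>i\<in>S. c ! i = (i \<in> U)"
      using x by auto
  qed
  then show False
    using assms S unfolding vc_bounded_def by blast
qed

lemma vc_bounded_reduction:
  assumes vc: "vc_bounded n A (Suc d) X" and X: "supported n A X" and j: "j \<in> A" "j < n"
  shows "vc_bounded n (A - {j}) d (reduction X j)"
  unfolding vc_bounded_def
proof (intro allI impI notI)
  fix S assume S: "S \<subseteq> A - {j}" "card S = Suc d" and shattered: "shatters n (reduction X j) S"
  have "j \<notin> S"
    using S(1) by blast
  have "shatters n X (insert j S)"
    unfolding shatters_def
  proof (intro conjI allI impI)
    show "insert j S \<subseteq> {..<n}"
      using shattered j by (simp add: shatters_def)
    fix U assume "U \<subseteq> insert j S"
    then have "U - {j} \<subseteq> S"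
      by blast
    then have "\<exists>c\<in>reduction X j. \<forall>i\<in>S. c ! i = (i \<in> U - {j})"
      using shattered unfolding shatters_def by blast
    then obtain c where c: "c \<in> reduction X j" "\<forall>i\<in>S. c ! i = (i \<in> U - {j})"
      by blast
    then have c': "c \<in> X" "\<not> c ! j" "c[j := True] \<in> X" "length c = n"
      using X supported_length by (auto simp: reduction_def)
    have on_S: "c ! i = (i \<in> U)" "c[j := True] ! i = (i \<in> U)" if "i \<in> S" for i
    proof -
      have "i \<noteq> j" "c ! i = (i \<in> U - {j})"
        using c(2) that \<open>j \<notin> S\<close> by blast+
      then show "c ! i = (i \<in> U)" "c[j := True] ! i = (i \<in> U)"
        by simp_all
    qed
    show "\<exists>c\<in>X. \<forall>i\<in>insert j S. c ! i = (i \<in> U)"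
    proof (cases "j \<in> U")
      case True
      then show ?thesis
        using c' j(2) on_S(2) by (intro bexI[of _ "c[j := True]"]) auto
    next
      case False
      then show ?thesis
        using c' on_S(1) by (intro bexI[of _ c]) auto
    qed
  qed
  moreover have "finite S"
    using S(2) by (simp add: card_ge_0_finite)
  then have "card (insert j S) = Suc (Suc d)"
    using S(2) \<open>j \<notin> S\<close> by simp
  ultimately show False
    using vc S(1) j(1) unfolding vc_bounded_def by (metis insert_subset subset_trans Diff_subset)
qed

lemma reduction_empty_if_vc_bounded_0:
  assumes vc: "vc_bounded n A 0 X" and X: "supported n A X" and j: "j \<in> A" "j < n"
  shows "reduction X j = {}"
proof (rule ccontr)
  assume "reduction X j \<noteq> {}"
  then obtain c where c: "c \<in> X" "\<not> c ! j" "c[j := True] \<in> X" "length c = n"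
    using X supported_length by (auto simp: reduction_def)
  have "shatters n X {j}"
    unfolding shatters_def
  proof (intro conjI allI impI)
    fix U assume "U \<subseteq> {j}"
    then consider "U = {}" | "U = {j}"
      by blast
    then show "\<exists>c\<in>X. \<forall>i\<in>{j}. c ! i = (i \<in> U)"
    proof cases
      case 1
      then show ?thesis
        using c by (intro bexI[of _ c]) auto
    next
      case 2
      then show ?thesis
        using c j(2) by (intro bexI[of _ "c[j := True]"]) auto
    qed
  qed (use j in simp)
  then show False
    using vc j(1) unfolding vc_bounded_def by simp
qed

lemma card_le_sauer_bound:
  assumes "finite A" "A \<subseteq> {..<n}" "supported n A X" "vc_bounded n A d X"
  shows "card X \<le> sauer_bound d (card A)"
  using assms
proof (induction "card A" arbitrary: A d X rule: less_induct)
  case less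
  show ?case
  proof (cases "A = {}")
    case True
    have "X \<subseteq> {replicate n False}"
      using less.prems(3) True supported_length supported_outside
      by (fastforce intro: nth_equalityI)
    then have "card X \<le> card {replicate n False}"
      by (intro card_mono) simp_all
    then have "card X \<le> 1"
      by simp
    then show ?thesis
      using True by simp
  next
    case False
    then obtain j where j: "j \<in> A"
      by blast
    have jn: "j < n"
      using j less.prems(2) by blast
    have smaller: "card (A - {j}) < card A" "finite (A - {j})" "A - {j} \<subseteq> {..<n}"
      using card_Diff1_less[OF less.prems(1) j] less.prems(1,2) by auto
    have X: "X \<subseteq> cube_space n"
      using less.prems(3) by (simp add: supported_def)
    have card_A: "card A = Suc (card (A - {j}))"
      using card_Suc_Diff1[OF less.prems(1) j] by simp
    have "card (project X j) \<le> sauer_bound d (card (A - {j}))"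
      using less.hyps[OF smaller supported_project[OF less.prems(3) jn] vc_bounded_project[OF less.prems(4)]] .
    moreover have "card (reduction X j) \<le> sauer_bound d' (card (A - {j}))" if "d = Suc d'" for d'
      using less.hyps[OF smaller supported_reduction[OF less.prems(3)]]
        vc_bounded_reduction[OF _ less.prems(3) j jn] less.prems(4) that by blast
    moreover have "reduction X j = {}" if "d = 0"
      using reduction_empty_if_vc_bounded_0[OF _ less.prems(3) j jn] less.prems(4) that by blast
    ultimately show ?thesis
      using card_project_reduction[OF X jn] card_A by (cases d) (simp_all add: sauer_bound_Suc_Suc)
  qed
qed

lemma maximum_project_reduction:
  assumes max: "maximum_on n A (Suc d) X" and A: "finite A" "A \<subseteq> {..<n}" and j: "j \<in> A"
  shows "maximum_on n (A - {j}) (Suc d) (project X j)" "maximum_on n (A - {j}) d (reduction X j)"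
proof -
  have X: "supported n A X" "vc_bounded n A (Suc d) X" "card X = sauer_bound (Suc d) (card A)"
    using max by (auto simp: maximum_on_def)
  have jn: "j < n"
    using A(2) j by blast
  have A': "finite (A - {j})" "A - {j} \<subseteq> {..<n}"
    using A by auto
  note P = supported_project[OF X(1) jn] vc_bounded_project[OF X(2)]
  note R = supported_reduction[OF X(1)] vc_bounded_reduction[OF X(2) X(1) j jn]
  have "card A = Suc (card (A - {j}))"
    using card_Suc_Diff1[OF A(1) j] by simp
  moreover have "card (project X j) + card (reduction X j) = card X"
    using card_project_reduction[of X n j] X(1) jn by (simp add: supported_def)
  ultimately have "card (project X j) + card (reduction X j) =
      sauer_bound (Suc d) (card (A - {j})) + sauer_bound d (card (A - {j}))"
    using X(3) by (simp add: sauer_bound_Suc_Suc)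
  moreover have "card (project X j) \<le> sauer_bound (Suc d) (card (A - {j}))"
    using card_le_sauer_bound[OF A' P] .
  moreover have "card (reduction X j) \<le> sauer_bound d (card (A - {j}))"
    using card_le_sauer_bound[OF A' R] .
  ultimately show "maximum_on n (A - {j}) (Suc d) (project X j)" "maximum_on n (A - {j}) d (reduction X j)"
    using P R by (simp_all add: maximum_on_def)
qed

lemma maximum_project:
  assumes max: "maximum_on n A d X" and A: "finite A" "A \<subseteq> {..<n}" and j: "j \<in> A"
  shows "maximum_on n (A - {j}) d (project X j)"
proof (cases d)
  case 0
  have X: "supported n A X" "vc_bounded n A 0 X" "card X = 1"
    using max 0 by (auto simp: maximum_on_def)
  have jn: "j < n"
    using A(2) j by blast
  have "card (project X j) = 1"
    using card_project_reduction[of X n j] reduction_empty_if_vc_bounded_0[OF X(2,1) j jn] X(1,3) jn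
    by (simp add: supported_def)
  then show ?thesis
    using supported_project[OF X(1) jn] vc_bounded_project[OF X(2)] 0 by (simp add: maximum_on_def)
next
  case (Suc d')
  then show ?thesis
    using maximum_project_reduction(1)[of n A d' X j] max A j by simp
qed

lemma project_reduction_subset:
  assumes "i \<noteq> k"
  shows "project (reduction X i) k \<subseteq> reduction (project X k) i"
proof
  fix x assume "x \<in> project (reduction X i) k"
  then obtain q where q: "q \<in> X" "\<not> q ! i" "q[i := True] \<in> X" "x = q[k := False]"
    by (auto simp: project_def reduction_def)
  have "x[i := True] = (q[i := True])[k := False]"
    using q(4) assms by (simp add: list_update_swap)
  then show "x \<in> reduction (project X k) i"
    using q assms by (auto simp: project_def reduction_def)
qed

lemma maximum_reduction_project_commute:
  assumes max: "maximum_on n A (Suc d) X" and A: "finite A" "A \<subseteq> {..<n}"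
    and ik: "i \<in> A" "k \<in> A" "i \<noteq> k"
  shows "project (reduction X i) k = reduction (project X k) i"
proof (rule card_subset_eq)
  have ki: "k \<in> A - {i}" and ik': "i \<in> A - {k}"
    using ik by auto
  have A': "finite (A - {i})" "A - {i} \<subseteq> {..<n}" "finite (A - {k})" "A - {k} \<subseteq> {..<n}"
    using A by auto
  have max1: "maximum_on n (A - {i} - {k}) d (project (reduction X i) k)"
    using maximum_project[OF maximum_project_reduction(2)[OF max A ik(1)] A'(1,2) ki] .
  have max2: "maximum_on n (A - {k} - {i}) d (reduction (project X k) i)"
    using maximum_project_reduction(2)[OF maximum_project_reduction(1)[OF max A ik(2)] A'(3,4) ik'] .
  have "A - {i} - {k} = A - {k} - {i}"
    by blast
  then show "card (project (reduction X i) k) = card (reduction (project X k) i)"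
    using max1 max2 by (simp add: maximum_on_def)
  show "finite (reduction (project X k) i)"
    using max2 by (auto simp: maximum_on_def supported_def intro: finite_subset_cube_space)
  show "project (reduction X i) k \<subseteq> reduction (project X k) i"
    using project_reduction_subset[OF ik(3)] .
qed

text \<open>In a maximum class, the diagonal of a square of the cube through a point of the class
  forces one of the adjacent sides: clearing coordinate k maps u and the diagonal point to
  an edge in direction i of the projection, which by the commutation lemma lifts to an
  i-edge of the class lying over one of the two k-sides of the square.\<close>

lemma maximum_square_side:
  assumes max: "maximum_on n A (Suc d) X" and A: "finite A" "A \<subseteq> {..<n}"
    and ik: "i \<in> A" "k \<in> A" "i \<noteq> k" and u: "u \<in> X" and diag: "flip (flip u i) k \<in> X"
  shows "flip u i \<in> X \<or> flip u k \<in> X"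
proof -
  let ?y = "flip (flip u i) k" and ?p = "u[i := False, k := False]"
  have u_len: "length u = n"
    using max u supported_length by (auto simp: maximum_on_def)
  have ikn: "i < n" "k < n"
    using A(2) ik by auto
  have "(if u ! i then ?y else u)[k := False] = ?p"
    using u_len ikn ik(3) by (intro list_eq_off_two[of _ n _ i k]) (auto simp: nth_flip)
  moreover have "(if u ! i then u else ?y)[k := False] = ?p[i := True]"
    using u_len ikn ik(3) by (intro list_eq_off_two[of _ n _ i k]) (auto simp: nth_flip)
  ultimately have "?p \<in> reduction (project X k) i"
    using u diag ikn u_len ik(3) unfolding reduction_def project_def
    by (auto simp: image_iff) metis+
  then have "?p \<in> project (reduction X i) k"
    using maximum_reduction_project_commute[OF max A ik] by simp
  then obtain q where q: "q \<in> X" "\<not> q ! i" "q[i := True] \<in> X" "?p = q[k := False]"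
    by (auto simp: project_def reduction_def)
  have q_len: "length q = n"
    using max q(1) supported_length by (auto simp: maximum_on_def)
  have agree: "q ! m = u ! m" if "m < n" "m \<noteq> i" "m \<noteq> k" for m
    using arg_cong[OF q(4), of "\<lambda>x. x ! m"] that by simp
  show ?thesis
  proof (cases "q ! k = u ! k")
    case True
    have "flip u i = (if u ! i then q else q[i := True])"
      using u_len q_len ikn ik(3) q(2) True agree
      by (intro list_eq_off_two[of _ n _ i k]) (auto simp: nth_flip)
    then show ?thesis
      using q(1,3) by (cases "u ! i") simp_all
  next
    case False
    have "flip u k = (if u ! i then q[i := True] else q)"
      using u_len q_len ikn ik(3) q(2) False agree
      by (intro list_eq_off_two[of _ n _ i k]) (auto simp: nth_flip)
    then show ?thesis
      using q(1,3) by (cases "u ! i") simp_all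
  qed
qed

lemma maximum_project_step_lift:
  assumes max: "maximum_on n A (Suc d) X" and A: "finite A" "A \<subseteq> {..<n}"
    and ik: "i \<in> A" "k \<in> A" "k \<noteq> i" and u: "u \<in> X" "flip u i \<notin> X"
    and step: "flip (u[i := False]) k \<in> project X i"
  shows "flip u k \<in> X"
proof -
  have i: "i < n"
    using A(2) ik(1) by blast
  have len: "\<And>x. x \<in> X \<Longrightarrow> length x = n"
    using max supported_length by (auto simp: maximum_on_def)
  obtain z where z: "z \<in> X" "z[i := False] = (flip u k)[i := False]"
    using step ik(3) by (auto simp: project_def flip_def list_update_swap)
  then have "z = flip u k \<or> z = flip (flip u i) k"
    using clear_eq_cases[OF _ _ i z(2)] len u(1) flip_commute by auto
  then show ?thesis
    using maximum_square_side[OF max A ik(1,2) ik(3)[symmetric] u(1)] u(2) z(1) by auto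
qed

text \<open>Maximum classes are isometric: if the direct step from u towards w leaves the class,
  a step found in the projection along that coordinate lifts to a step of u.\<close>

lemma maximum_isometric:
  assumes "finite A" "A \<subseteq> {..<n}" "maximum_on n A d X"
  shows "isometric n X"
  using assms
proof (induction "card A" arbitrary: A d X rule: less_induct)
  case less
  have X: "supported n A X" "card X = sauer_bound d (card A)"
    using less.prems(3) by (auto simp: maximum_on_def)
  show ?case
    unfolding isometric_def
  proof (intro ballI impI)
    fix u w assume uw: "u \<in> X" "w \<in> X" "u \<noteq> w"
    have len: "length u = n" "length w = n"
      using X(1) uw supported_length by blast+
    obtain i where i: "i < n" "u ! i \<noteq> w ! i"
      using len uw(3) by (auto simp: list_eq_iff_nth_eq)
    have iA: "i \<in> A"
      using supported_outside[OF X(1)] uw i by blast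
    show "\<exists>k<n. u ! k \<noteq> w ! k \<and> flip u k \<in> X"
    proof (cases "flip u i \<in> X")
      case no_step: False
      have "card {u, w} \<le> card X"
        using uw X(1) by (intro card_mono) (auto simp: supported_def intro: finite_subset_cube_space)
      then obtain d' where d: "d = Suc d'"
        using X(2) uw(3) by (cases d) auto
      have "card (A - {i}) < card A" "finite (A - {i})" "A - {i} \<subseteq> {..<n}"
        using card_Diff1_less[OF less.prems(1) iA] less.prems(1,2) by auto
      then have iso: "isometric n (project X i)"
        using less.hyps maximum_project[OF less.prems(3,1,2) iA] by blast
      have "u[i := False] \<noteq> w[i := False]"
      proof
        assume "u[i := False] = w[i := False]"
        then have "w = u \<or> w = flip u i"
          using clear_eq_cases[OF len i(1)] by simp
        then show False
          using i(2) no_step uw(2) by blast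
      qed
      then obtain k where k: "k < n" "u[i := False] ! k \<noteq> w[i := False] ! k"
        "flip (u[i := False]) k \<in> project X i"
        using iso uw unfolding isometric_def project_def by blast
      have "k \<noteq> i"
        using k(2) len i(1) by auto
      then have uk: "u ! k \<noteq> w ! k" "k \<in> A"
        using k(2) supported_outside[OF X(1)] uw k(1) by auto
      then have "flip u k \<in> X"
        using maximum_project_step_lift[of n A d' X i k u] less.prems(1-3) d iA uk(2) \<open>k \<noteq> i\<close>
          uw(1) no_step k(3)
        by simp
      then show ?thesis
        using k(1) uk(1) by blast
    qed (use i in blast)
  qed
qed

section \<open>Maximum classes of VC-dimension 2 are tame\<close>

lemma edge_side_False: "edge_side C j False = reduction C j"
  by (auto simp: edge_side_def reduction_def flip_def)

lemma edge_side_True: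
  assumes "C \<subseteq> cube_space n" "j < n"
  shows "edge_side C j True = (\<lambda>x. flip x j) ` reduction C j"
proof
  show "edge_side C j True \<subseteq> (\<lambda>x. flip x j) ` reduction C j"
  proof
    fix x assume x: "x \<in> edge_side C j True"
    then have "length x = n"
      using assms(1) length_in_cube_space by (auto simp: edge_side_def)
    then have "flip x j \<in> reduction C j" "x = flip (flip x j) j"
      using x assms(2) by (auto simp: edge_side_def reduction_def flip_def list_update_nth_self)
    then show "x \<in> (\<lambda>x. flip x j) ` reduction C j"
      by blast
  qed
  show "(\<lambda>x. flip x j) ` reduction C j \<subseteq> edge_side C j True"
  proof
    fix x assume "x \<in> (\<lambda>x. flip x j) ` reduction C j"
    then obtain y where y: "y \<in> C" "\<not> y ! j" "y[j := True] \<in> C" "x = flip y j"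
      by (auto simp: reduction_def)
    moreover have "length y = n"
      using y(1) assms(1) length_in_cube_space by blast
    ultimately show "x \<in> edge_side C j True"
      using assms(2) by (auto simp: edge_side_def flip_def list_update_nth_self)
  qed
qed

lemma no_shattered_pair_edge_side:
  assumes vc: "vc_bounded n {..<n} 2 C" and C: "C \<subseteq> cube_space n" and j: "j < n"
  shows "no_shattered_pair n (edge_side C j a)"
  unfolding no_shattered_pair_def
proof (intro allI impI notI)
  fix k l assume kl: "k < n" "l < n" "k \<noteq> l"
    and pair: "\<forall>a' b'. \<exists>x\<in>edge_side C j a. x ! k = a' \<and> x ! l = b'"
  have "k \<noteq> j" "l \<noteq> j"
    using pair[rule_format, of "\<not> a" "\<not> a"] by (auto simp: edge_side_def)
  have "shatters n C {j, k, l}"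
    unfolding shatters_def
  proof (intro conjI allI impI)
    show "{j, k, l} \<subseteq> {..<n}"
      using j kl by simp
    fix U assume "U \<subseteq> {j, k, l}"
    obtain x where x: "x \<in> edge_side C j a" "x ! k = (k \<in> U)" "x ! l = (l \<in> U)"
      using pair by blast
    then have "x \<in> C" "flip x j \<in> C" "length x = n"
      using C length_in_cube_space by (auto simp: edge_side_def)
    moreover have "\<forall>i\<in>{j, k, l}. (if (j \<in> U) = (x ! j) then x else flip x j) ! i = (i \<in> U)"
      using x \<open>k \<noteq> j\<close> \<open>l \<noteq> j\<close> calculation(3) j by auto
    ultimately show "\<exists>c\<in>C. \<forall>i\<in>{j, k, l}. c ! i = (i \<in> U)"
      by (cases "(j \<in> U) = (x ! j)") auto
  qed
  moreover have "card {j, k, l} = Suc 2"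
    using \<open>k \<noteq> j\<close> \<open>l \<noteq> j\<close> kl(3) by simp
  ultimately show False
    using vc j kl unfolding vc_bounded_def by (metis insert_subset lessThan_iff empty_subsetI)
qed

lemma maximum_vc2_tame:
  assumes max: "maximum_on n {..<n} 2 C"
  shows "tame n C"
proof (rule tameI)
  show C: "C \<subseteq> cube_space n"
    using max by (simp add: maximum_on_def supported_def)
  fix j a assume j: "j < n"
  have "maximum_on n ({..<n} - {j}) 1 (reduction C j)"
    using maximum_project_reduction(2)[of n "{..<n}" 1 C j] max j by (simp add: numeral_2_eq_2)
  then have iso: "isometric n (reduction C j)"
    by (rule maximum_isometric[rotated 2]) auto
  have "reduction C j \<subseteq> cube_space n"
    using C by (auto simp: reduction_def)
  then show "isometric n (edge_side C j a)"
    using iso isometric_flip_image[OF iso _ j] edge_side_True[OF C j] edge_side_False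
    by (cases a) simp_all
  show "no_shattered_pair n (edge_side C j a)"
    using no_shattered_pair_edge_side[OF _ C j] max by (simp add: maximum_on_def)
qed

lemma maximum_vc2_maximum_on:
  assumes "maximum_vc2 n C"
  shows "maximum_on n {..<n} 2 C"
proof -
  have C: "C \<subseteq> cube_space n" "vc_dim n C = 2" "card C = 1 + n + (n choose 2)"
    using assms by (auto simp: maximum_vc2_def)
  have "finite {card S | S. shatters n C S}"
  proof (rule finite_subset)
    show "{card S | S. shatters n C S} \<subseteq> {..n}"
      using card_mono[of "{..<n}"] by (fastforce simp: shatters_def)
  qed simp
  then have bound: "card S \<le> 2" if "shatters n C S" for S
    using that C(2) Max_ge unfolding vc_dim_def by fastforce
  have "vc_bounded n {..<n} 2 C"
    unfolding vc_bounded_def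
  proof (intro allI impI notI)
    fix S assume "card S = Suc 2" "shatters n C S"
    then show False
      using bound by fastforce
  qed
  moreover have "sauer_bound 2 n = 1 + n + (n choose 2)"
    by (simp add: sauer_bound_def numeral_2_eq_2)
  ultimately show ?thesis
    using C by (simp add: maximum_on_def supported_def)
qed

theorem theorem7:
  fixes n :: nat and C :: "bool list set"
  assumes "maximum_vc2 n C"
  shows "corner_peelable n C"
  using tame_corner_peelable[OF maximum_vc2_tame[OF maximum_vc2_maximum_on[OF assms]]] .

end
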